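(* Let $G$ be a graph with no induced subgraph isomorphic to $C_4$. Then $G$ is localizable if and only if every vertex of $G$ is contained in exactly one simplicial clique of $G$.
   Context: A clique is strong if it intersects every maximal independent set. A graph is localizable if its vertex set admits a partition into strong cliques. A clique $C$ of $G$ is simplicial if there is a vertex $v\in V(G)$ with $C=N[v]$, the closed neighborhood of $v$. *)

theory Defs
  imports Main
begin

definition graph :: "'a set \<Rightarrow> ('a \<Rightarrow> 'a \<Rightarrow> bool) \<Rightarrow> bool" where
  "graph V E \<longleftrightarrow> finite V \<and> (\<forall>u v. E u v \<longrightarrow> E v u) \<and> (\<forall>v. \<not> E v v)
     \<and> (\<forall>u v. E u v \<longrightarrow> u \<in> V \<and> v \<in> V)"

definition clique :: "'a set \<Rightarrow> ('a \<Rightarrow> 'a \<Rightarrow> bool) \<Rightarrow> 'a set \<Rightarrow> bool" where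
  "clique V E C \<longleftrightarrow> C \<subseteq> V \<and> (\<forall>u\<in>C. \<forall>v\<in>C. u \<noteq> v \<longrightarrow> E u v)"

definition independent :: "'a set \<Rightarrow> ('a \<Rightarrow> 'a \<Rightarrow> bool) \<Rightarrow> 'a set \<Rightarrow> bool" where
  "independent V E I \<longleftrightarrow> I \<subseteq> V \<and> (\<forall>u\<in>I. \<forall>v\<in>I. \<not> E u v)"

definition maximal_independent :: "'a set \<Rightarrow> ('a \<Rightarrow> 'a \<Rightarrow> bool) \<Rightarrow> 'a set \<Rightarrow> bool" where
  "maximal_independent V E I \<longleftrightarrow> independent V E I \<and>
     (\<forall>J. independent V E J \<and> I \<subseteq> J \<longrightarrow> J = I)"

definition strong_clique :: "'a set \<Rightarrow> ('a \<Rightarrow> 'a \<Rightarrow> bool) \<Rightarrow> 'a set \<Rightarrow> bool" where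
  "strong_clique V E C \<longleftrightarrow> clique V E C \<and>
     (\<forall>I. maximal_independent V E I \<longrightarrow> C \<inter> I \<noteq> {})"

definition is_partition :: "'a set \<Rightarrow> 'a set set \<Rightarrow> bool" where
  "is_partition V P \<longleftrightarrow> \<Union>P = V \<and> {} \<notin> P \<and>
     (\<forall>A\<in>P. \<forall>B\<in>P. A \<noteq> B \<longrightarrow> A \<inter> B = {})"

definition localizable :: "'a set \<Rightarrow> ('a \<Rightarrow> 'a \<Rightarrow> bool) \<Rightarrow> bool" where
  "localizable V E \<longleftrightarrow> (\<exists>P. is_partition V P \<and> (\<forall>C\<in>P. strong_clique V E C))"

definition closed_nbhd :: "'a set \<Rightarrow> ('a \<Rightarrow> 'a \<Rightarrow> bool) \<Rightarrow> 'a \<Rightarrow> 'a set" where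
  "closed_nbhd V E v = insert v {u\<in>V. E v u}"

definition simplicial_clique :: "'a set \<Rightarrow> ('a \<Rightarrow> 'a \<Rightarrow> bool) \<Rightarrow> 'a set \<Rightarrow> bool" where
  "simplicial_clique V E C \<longleftrightarrow> clique V E C \<and> (\<exists>v\<in>V. C = closed_nbhd V E v)"

definition C4_free :: "'a set \<Rightarrow> ('a \<Rightarrow> 'a \<Rightarrow> bool) \<Rightarrow> bool" where
  "C4_free V E \<longleftrightarrow> \<not> (\<exists>a\<in>V. \<exists>b\<in>V. \<exists>c\<in>V. \<exists>d\<in>V. distinct [a,b,c,d] \<and>
     E a b \<and> E b c \<and> E c d \<and> E d a \<and> \<not> E a c \<and> \<not> E b d)"

end

theory Submission
  imports Defs
begin

text \<open>A simplicial clique N[v] is strong because every maximal independent set either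
  contains v or contains a neighbour of v. Conversely, let C be a strong clique in a
  C4-free graph and suppose every vertex of C has a neighbour outside C. Two adjacent
  outside vertices y have comparable traces N(y) \<inter> C (otherwise they span an induced
  C4 with two vertices of C), so a maximal independent set among the outside vertices whose
  traces are inclusion-maximal dominates C; extending it to a maximal independent set
  of the whole graph yields one that misses C. Hence some c \<in> C has N[c] = C. Thus a
  partition into strong cliques consists of simplicial cliques, and any simplicial
  clique N[u] coincides with the part containing u: the partition is exactly the set
  of all simplicial cliques.\<close>

lemma is_partition_iff_unique_part:
  assumes parts: "\<forall>A\<in>P. A \<noteq> {} \<and> A \<subseteq> V"
  shows "is_partition V P \<longleftrightarrow> (\<forall>v\<in>V. \<exists>!A. A \<in> P \<and> v \<in> A)"
proof
  assume partition: "is_partition V P"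
  show "\<forall>v\<in>V. \<exists>!A. A \<in> P \<and> v \<in> A"
  proof
    fix v assume "v \<in> V"
    with partition obtain A where A: "A \<in> P" "v \<in> A" unfolding is_partition_def by blast
    show "\<exists>!A. A \<in> P \<and> v \<in> A"
    proof (rule ex1I)
      show "A \<in> P \<and> v \<in> A" using A by blast
      show "B = A" if "B \<in> P \<and> v \<in> B" for B
        using partition A that unfolding is_partition_def by blast
    qed
  qed
next
  assume unique: "\<forall>v\<in>V. \<exists>!A. A \<in> P \<and> v \<in> A"
  have "V \<subseteq> \<Union>P"
  proof
    fix v assume "v \<in> V"
    with unique obtain A where "A \<in> P" "v \<in> A" by blast
    then show "v \<in> \<Union>P" by blast
  qed
  moreover have "A \<inter> B = {}" if AB: "A \<in> P" "B \<in> P" "A \<noteq> B" for A B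
  proof (rule ccontr)
    assume "A \<inter> B \<noteq> {}"
    then obtain v where v: "v \<in> A" "v \<in> B" by blast
    with parts AB(1) have "\<exists>!A. A \<in> P \<and> v \<in> A" using unique by blast
    with AB v show False by blast
  qed
  ultimately show "is_partition V P" using parts unfolding is_partition_def by blast
qed

lemma independent_extends_to_maximal:
  assumes "finite V" and "independent V E I"
  shows "\<exists>J. maximal_independent V E J \<and> I \<subseteq> J"
proof -
  have "finite {J. independent V E J}"
    by (rule finite_subset[of _ "Pow V"]) (auto simp: independent_def assms(1))
  from finite_has_maximal2[OF this, of I] assms(2) show ?thesis
    unfolding maximal_independent_def by auto
qed

lemma maximal_independent_dominates:
  assumes "maximal_independent V E I" and "v \<in> V" and "v \<notin> I" and "\<not> E v v"
  shows "\<exists>u\<in>I. E v u \<or> E u v"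
proof (rule ccontr)
  assume "\<not> ?thesis"
  with assms have "independent V E (insert v I)"
    unfolding maximal_independent_def independent_def by auto
  with assms(1) have "insert v I = I"
    unfolding maximal_independent_def by blast
  with assms(3) show False by blast
qed

lemma simplicial_clique_imp_strong_clique:
  assumes "graph V E" and "simplicial_clique V E C"
  shows "strong_clique V E C"
proof -
  obtain v where v: "v \<in> V" "C = closed_nbhd V E v" and cl: "clique V E C"
    using assms(2) unfolding simplicial_clique_def by blast
  have "C \<inter> I \<noteq> {}" if I: "maximal_independent V E I" for I
  proof (cases "v \<in> I")
    case True
    then show ?thesis using v(2) unfolding closed_nbhd_def by blast
  next
    case False
    have "\<not> E v v" "\<And>u. E u v \<Longrightarrow> E v u" using assms(1) unfolding graph_def by blast+
    with maximal_independent_dominates[OF I v(1) False] obtain u where "u \<in> I" "E v u"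
      by blast
    moreover have "u \<in> V" using I \<open>u \<in> I\<close> unfolding maximal_independent_def independent_def by blast
    ultimately show ?thesis using v(2) unfolding closed_nbhd_def by blast
  qed
  with cl show ?thesis unfolding strong_clique_def by blast
qed

lemma strong_clique_not_dominated_by_independent:
  assumes "finite V" and "strong_clique V E C" and "independent V E I"
  shows "\<exists>c\<in>C. \<forall>z\<in>I. \<not> E z c"
proof -
  obtain J where J: "maximal_independent V E J" "I \<subseteq> J"
    using independent_extends_to_maximal[OF assms(1,3)] by blast
  with assms(2) obtain c where "c \<in> C" "c \<in> J"
    unfolding strong_clique_def by blast
  moreover have "\<not> E z c" if "z \<in> I" for z
    using J \<open>c \<in> J\<close> that unfolding maximal_independent_def independent_def by blast
  ultimately show ?thesis by blast
qed

lemma clique_subset_closed_nbhd: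
  assumes "clique V E C" and "u \<in> C"
  shows "C \<subseteq> closed_nbhd V E u"
  using assms unfolding clique_def closed_nbhd_def by auto

lemma C4_free_clique_traces_comparable:
  assumes g: "graph V E" and c4: "C4_free V E" and cl: "clique V E C"
    and xy: "x \<in> V - C" "y \<in> V - C" "E x y"
  shows "{c\<in>C. E x c} \<subseteq> {c\<in>C. E y c} \<or> {c\<in>C. E y c} \<subseteq> {c\<in>C. E x c}"
proof (rule ccontr)
  assume "\<not> ?thesis"
  then obtain a c where a: "a \<in> C" "E x a" "\<not> E y a" and c: "c \<in> C" "E y c" "\<not> E x c"
    by blast
  have sym: "\<And>u v. E u v \<Longrightarrow> E v u" and "x \<noteq> y"
    using g xy(3) unfolding graph_def by auto
  have "a \<noteq> c" using a c by blast
  with cl a c have "E a c" "a \<in> V" "c \<in> V" unfolding clique_def by auto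
  moreover have "distinct [x, a, c, y]"
    using a c xy \<open>a \<noteq> c\<close> \<open>x \<noteq> y\<close> by auto
  ultimately have "E x a \<and> E a c \<and> E c y \<and> E y x \<and> \<not> E x c \<and> \<not> E a y
      \<and> distinct [x, a, c, y] \<and> x \<in> V \<and> y \<in> V \<and> a \<in> V \<and> c \<in> V"
    using a c xy sym by blast
  with c4 show False unfolding C4_free_def by blast
qed

lemma C4_free_clique_dominated_by_independent:
  assumes g: "graph V E" and c4: "C4_free V E" and cl: "clique V E C"
    and out: "\<forall>c\<in>C. \<exists>y\<in>V - C. E y c"
  shows "\<exists>I. independent V E I \<and> (\<forall>c\<in>C. \<exists>z\<in>I. E z c)"
proof -
  have fin: "finite V" and sym: "\<And>u v. E u v \<Longrightarrow> E v u" and irr: "\<And>v. \<not> E v v"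
    using g unfolding graph_def by auto
  define trace where "trace y = {c\<in>C. E y c}" for y
  define M where "M = {x\<in>V - C. \<forall>y\<in>V - C. trace x \<subseteq> trace y \<longrightarrow> trace y = trace x}"
  have cover: "\<exists>x\<in>M. c \<in> trace x" if "c \<in> C" for c
  proof -
    obtain y where y: "y \<in> V - C" "E y c" using out \<open>c \<in> C\<close> by blast
    have "finite (trace ` (V - C))" using fin by simp
    from finite_has_maximal2[OF this, of "trace y"] y(1)
    obtain x where x: "x \<in> V - C" "trace y \<subseteq> trace x"
      "\<forall>z\<in>V - C. trace x \<subseteq> trace z \<longrightarrow> trace x = trace z" by auto
    then have "x \<in> M" unfolding M_def by auto
    moreover have "c \<in> trace x" using x(2) y(2) \<open>c \<in> C\<close> unfolding trace_def by blast
    ultimately show ?thesis by blast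
  qed
  have "finite M" using fin unfolding M_def by simp
  then obtain I where I: "maximal_independent M E I"
    using independent_extends_to_maximal[of M E "{}"] by (auto simp: independent_def)
  have IM: "I \<subseteq> M" using I unfolding maximal_independent_def independent_def by blast
  have "\<exists>z\<in>I. E z c" if "c \<in> C" for c
  proof -
    obtain x where x: "x \<in> M" "c \<in> trace x" using cover \<open>c \<in> C\<close> by blast
    show ?thesis
    proof (cases "x \<in> I")
      case True
      with x(2) show ?thesis unfolding trace_def by blast
    next
      case False
      with maximal_independent_dominates[OF I x(1)] irr sym
      obtain z where z: "z \<in> I" "E x z" by blast
      with IM x(1) have "x \<in> V - C" "z \<in> V - C" "z \<in> M" unfolding M_def by auto
      with C4_free_clique_traces_comparable[OF g c4 cl] z(2) x(1)
      have "trace x = trace z" unfolding M_def trace_def by blast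
      with x(2) z(1) show ?thesis unfolding trace_def by blast
    qed
  qed
  moreover have "independent V E I"
    using I IM unfolding maximal_independent_def independent_def M_def by blast
  ultimately show ?thesis by blast
qed

lemma C4_free_strong_clique_imp_simplicial:
  assumes g: "graph V E" and c4: "C4_free V E" and s: "strong_clique V E C"
  shows "simplicial_clique V E C"
proof -
  have cl: "clique V E C" using s unfolding strong_clique_def by blast
  have "finite V" using g unfolding graph_def by blast
  have "\<not> (\<forall>c\<in>C. \<exists>y\<in>V - C. E y c)"
  proof
    assume "\<forall>c\<in>C. \<exists>y\<in>V - C. E y c"
    then obtain I where "independent V E I" "\<forall>c\<in>C. \<exists>z\<in>I. E z c"
      using C4_free_clique_dominated_by_independent[OF g c4 cl] by blast
    with strong_clique_not_dominated_by_independent[OF \<open>finite V\<close> s] show False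
      by blast
  qed
  then obtain c where c: "c \<in> C" "\<forall>y\<in>V - C. \<not> E y c" by blast
  have "c \<in> V" using c(1) cl unfolding clique_def by blast
  have "closed_nbhd V E c \<subseteq> C"
    using c g unfolding graph_def closed_nbhd_def by auto
  moreover have "C \<subseteq> closed_nbhd V E c"
    using clique_subset_closed_nbhd[OF cl c(1)] .
  ultimately show ?thesis
    using cl \<open>c \<in> V\<close> unfolding simplicial_clique_def by blast
qed

lemma simplicial_clique_eq_closed_nbhd:
  assumes "simplicial_clique V E D" and "u \<in> D" and "clique V E (closed_nbhd V E u)"
  shows "closed_nbhd V E u = D"
proof
  obtain w where w: "D = closed_nbhd V E w" and clD: "clique V E D"
    using assms(1) unfolding simplicial_clique_def by blast
  show "D \<subseteq> closed_nbhd V E u"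
    using clique_subset_closed_nbhd[OF clD assms(2)] .
  moreover have "w \<in> D" unfolding w closed_nbhd_def by blast
  ultimately have "w \<in> closed_nbhd V E u" by blast
  from clique_subset_closed_nbhd[OF assms(3) this]
  show "closed_nbhd V E u \<subseteq> D" unfolding w .
qed

lemma C4_free_strong_clique_partition_eq_simplicial:
  assumes g: "graph V E" and c4: "C4_free V E"
    and P: "is_partition V P" "\<forall>C\<in>P. strong_clique V E C"
  shows "P = {C. simplicial_clique V E C}"
proof (intro set_eqI iffI; simp)
  show "simplicial_clique V E C" if "C \<in> P" for C
    using C4_free_strong_clique_imp_simplicial[OF g c4] P(2) that by blast
  fix C assume C: "simplicial_clique V E C"
  then obtain u where u: "u \<in> V" "C = closed_nbhd V E u" "clique V E C"
    unfolding simplicial_clique_def by blast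
  then obtain D where "D \<in> P" "u \<in> D" using P(1) unfolding is_partition_def by blast
  moreover from this have "simplicial_clique V E D"
    using C4_free_strong_clique_imp_simplicial[OF g c4] P(2) by blast
  ultimately show "C \<in> P" using simplicial_clique_eq_closed_nbhd u by metis
qed

theorem mainTheorem10:
  fixes V :: "'a set" and E :: "'a \<Rightarrow> 'a \<Rightarrow> bool"
  assumes "graph V E" and "C4_free V E"
  shows "localizable V E \<longleftrightarrow>
    (\<forall>v\<in>V. \<exists>!C. simplicial_clique V E C \<and> v \<in> C)"
proof -
  let ?S = "{C. simplicial_clique V E C}"
  have "\<forall>C\<in>?S. C \<noteq> {} \<and> C \<subseteq> V"
    unfolding simplicial_clique_def clique_def closed_nbhd_def by auto
  then have "is_partition V ?S \<longleftrightarrow> (\<forall>v\<in>V. \<exists>!C. simplicial_clique V E C \<and> v \<in> C)"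
    by (simp add: is_partition_iff_unique_part)
  moreover have "localizable V E \<longleftrightarrow> is_partition V ?S"
    using C4_free_strong_clique_partition_eq_simplicial[OF assms]
      simplicial_clique_imp_strong_clique[OF assms(1)]
    unfolding localizable_def by blast
  ultimately show ?thesis by blast
qed

end
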